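(* For the public-key scheme $\mathsf{LWE\text{-}PKE}(n,q,\chi)$, there is a quantum algorithm that makes one quantum query to the decryption function $\mathsf{Dec}_{\mathbf{sk}}$ and recovers the entire secret key $\mathbf{sk}$ with probability at least $4/\pi^2-o(1)$.
   Context: $\mathsf{LWE\text{-}PKE}(n,q,\chi)$, for integers $m\ge n\ge1$, $q\ge2$ and a discrete error distribution $\chi$ on $\mathbb Z_q$: $\mathsf{KeyGen}$ outputs secret key $\mathbf{sk}=\mathbf k$ uniform in $\mathbb Z_q^n$ and public key $(\mathbf A,\mathbf A\mathbf k+\mathbf e)$ with $\mathbf A$ uniform in $\mathbb Z_q^{m\times n}$ and $\mathbf e\leftarrow\chi^m$; to encrypt $b\in\{0,1\}$, pick random $\mathbf v\in\{0,1\}^m$ of Hamming weight about $m/2$ and output $(\mathbf v^{\mathsf T}\mathbf A,\mathbf v^{\mathsf T}(\mathbf A\mathbf k+\mathbf e)+b\lfloor q/2\rfloor)\in\mathbb Z_q^{n+1}$; $\mathsf{Dec}_{\mathbf{sk}}(\mathbf a,c)$ outputs $0$ if $|c-\langle\mathbf a,\mathbf{sk}\rangle|\le\lfloor q/4\rfloor$ and $1$ otherwise (arithmetic mod $q$, $|\cdot|$ the absolute value of the representative of least absolute value). A quantum query to $\mathsf{Dec}_{\mathbf{sk}}$ means one application of $|\mathbf a,c\rangle|y\rangle\mapsto|\mathbf a,c\rangle|y\oplus\mathsf{Dec}_{\mathbf{sk}}(\mathbf a,c)\rangle$ on arbitrary superpositions of $(\mathbf a,c)\in\mathbb Z_q^{n+1}$.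 *)

theory Defs
  imports "HOL-Analysis.Analysis"
begin

text \<open>Elements of Z_q are represented by naturals in {0..<q}; vectors in Z_q^n by
  nat lists of length n with entries in {0..<q}.\<close>

definition zq_vecs :: "nat \<Rightarrow> nat \<Rightarrow> nat list set" where
  "zq_vecs n q = {v. length v = n \<and> (\<forall>x\<in>set v. x < q)}"

definition inner_zq :: "nat \<Rightarrow> nat list \<Rightarrow> nat list \<Rightarrow> int" where
  "inner_zq q a k = (int (\<Sum>i<length a. a ! i * k ! i)) mod int q"

definition abs_zq :: "nat \<Rightarrow> int \<Rightarrow> int" where
  "abs_zq q x = min (x mod int q) (int q - x mod int q)"

text \<open>Decryption; True encodes output bit 1, False encodes 0.\<close>
definition lwe_dec :: "nat \<Rightarrow> nat list \<Rightarrow> nat list \<Rightarrow> nat \<Rightarrow> bool" where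
  "lwe_dec q sk a c = (\<not> (abs_zq q (int c - inner_zq q a sk) \<le> int (q div 4)))"

text \<open>Computational basis of the quantum memory: query register (a,c) in Z_q^(n+1),
  answer qubit y, and a workspace register with w basis states.\<close>
type_synonym qbasis = "nat list \<times> nat \<times> bool \<times> nat"

definition qbasis_set :: "nat \<Rightarrow> nat \<Rightarrow> nat \<Rightarrow> qbasis set" where
  "qbasis_set n q w = {(a, c, y, j). a \<in> zq_vecs n q \<and> c < q \<and> j < w}"

type_synonym qstate = "qbasis \<Rightarrow> complex"
type_synonym qop = "qbasis \<Rightarrow> qbasis \<Rightarrow> complex"

definition unitary_on :: "qbasis set \<Rightarrow> qop \<Rightarrow> bool" where
  "unitary_on S U \<longleftrightarrow>
     (\<forall>x\<in>S. \<forall>y\<in>S. (\<Sum>z\<in>S. cnj (U z x) * U z y) = (if x = y then 1 else 0))"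

definition apply_op :: "qbasis set \<Rightarrow> qop \<Rightarrow> qstate \<Rightarrow> qstate" where
  "apply_op S U \<psi> = (\<lambda>x. \<Sum>y\<in>S. U x y * \<psi> y)"

definition dec_oracle :: "nat \<Rightarrow> nat list \<Rightarrow> qstate \<Rightarrow> qstate" where
  "dec_oracle q sk \<psi> = (\<lambda>(a, c, y, j). \<psi> (a, c, y \<noteq> lwe_dec q sk a c, j))"

definition init_state :: "nat \<Rightarrow> qstate" where
  "init_state n = (\<lambda>x. if x = (replicate n 0, 0, False, 0) then 1 else 0)"

text \<open>Success probability of the one-query algorithm (U0, query, U1, measure in the
  computational basis, classical post-processing out) in outputting sk.\<close>
definition one_query_success ::
  "nat \<Rightarrow> nat \<Rightarrow> nat \<Rightarrow> qop \<Rightarrow> qop \<Rightarrow> (qbasis \<Rightarrow> nat list) \<Rightarrow> nat list \<Rightarrow> real" where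
  "one_query_success n q w U0 U1 out sk =
     (let S = qbasis_set n q w;
          \<phi> = apply_op S U1 (dec_oracle q sk (apply_op S U0 (init_state n)))
      in \<Sum>x\<in>{x\<in>S. out x = sk}. (cmod (\<phi> x))\<^sup>2)"

end

theory Submission
  imports Defs "HOL-Real_Asymp.Real_Asymp"
begin

(* Prepare the uniform superposition over (a, c) in Z_q^n x Z_q with the answer qubit in
   |-> = (|0> - |1>)/sqrt 2.  The query then only multiplies |a, c> by (-1)^Dec(a, c), and this
   sign depends on c - <a, sk> mod q alone: it is the +-1 threshold function s(t) = 1 iff
   |t| <= floor(q/4).  After a Fourier transform on Z_q^n x Z_q the amplitude of |sk, 1> is the
   first Fourier coefficient (1/q) sum_t e(t/q) s(t) of s.  Up to a unimodular factor this is a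
   geometric sum, of modulus 2 sin(pi (2 floor(q/4) + 1)/q) / (q sin(pi/q)), which tends to 2/pi;
   so measuring yields sk with probability at least 4/pi^2 - o(1). *)

section \<open>Roots of unity\<close>

definition unity_root :: "nat \<Rightarrow> int \<Rightarrow> complex" where
  "unity_root q t = cis (2 * pi * of_int t / of_nat q)"

lemma unity_root_0 [simp]: "unity_root q 0 = 1"
  by (simp add: unity_root_def)

lemma norm_unity_root [simp]: "norm (unity_root q t) = 1"
  by (simp add: unity_root_def)

lemma unity_root_add: "unity_root q (s + t) = unity_root q s * unity_root q t"
  by (simp add: unity_root_def cis_mult add_divide_distrib distrib_left)

lemma cnj_unity_root: "cnj (unity_root q t) = unity_root q (- t)"
  by (simp add: unity_root_def cis_cnj)

lemma unity_root_power: "unity_root q t ^ k = unity_root q (int k * t)"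
  unfolding unity_root_def Complex.DeMoivre by (simp add: algebra_simps)

lemma unity_root_eq_1_iff:
  assumes "q > 0"
  shows "unity_root q t = 1 \<longleftrightarrow> int q dvd t"
proof
  assume "unity_root q t = 1"
  then have "cos (2 * pi * of_int t / of_nat q) = 1"
    unfolding unity_root_def by (metis cis.sel(1) one_complex.sel(1))
  then obtain k :: int where "2 * pi * of_int t / of_nat q = of_int k * 2 * pi"
    by (auto simp: cos_one_2pi_int)
  then have "real_of_int t = real_of_int (k * int q)"
    using assms by (simp add: field_simps)
  then show "int q dvd t"
    by (simp only: of_int_eq_iff) simp
next
  assume "int q dvd t"
  then obtain k where "t = int q * k" ..
  then have "2 * pi * of_int t / of_nat q = 2 * pi * real_of_int k"
    using assms by simp
  then show "unity_root q t = 1"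
    by (simp add: unity_root_def)
qed

lemma unity_root_mod:
  assumes "q > 0"
  shows "unity_root q (t mod int q) = unity_root q t"
proof -
  have "unity_root q t = unity_root q (t mod int q) * unity_root q (int q * (t div int q))"
    by (metis unity_root_add mod_mult_div_eq)
  then show ?thesis
    using assms by (simp add: unity_root_eq_1_iff)
qed

lemma sum_unity_root_multiples:
  assumes "q > 0"
  shows "(\<Sum>v<q. unity_root q (int v * t)) = (if int q dvd t then of_nat q else 0)"
proof (cases "int q dvd t")
  case True
  then have "unity_root q t = 1"
    using assms by (simp add: unity_root_eq_1_iff)
  then show ?thesis
    using True by (simp flip: unity_root_power)
next
  case False
  have "unity_root q t ^ q = 1"
    using assms by (simp add: unity_root_power unity_root_eq_1_iff)
  then show ?thesis
    using False assms by (simp add: sum_gp_strict unity_root_eq_1_iff flip: unity_root_power)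
qed

lemma int_dvd_diff_iff_eq:
  assumes "a < q" and "b < q"
  shows "int q dvd int b - int a \<longleftrightarrow> a = b"
proof
  assume "int q dvd int b - int a"
  then show "a = b"
    using assms dvd_imp_le_int[of "int b - int a" "int q"] by fastforce
qed simp

lemma sum_lessThan_shift_periodic:
  assumes "q > 0" and periodic: "\<And>t. g (t mod int q) = g t"
  shows "(\<Sum>c<q. g (int c - r)) = (\<Sum>c<q. g (int c))"
proof (rule sum.reindex_bij_witness[where j = "\<lambda>c. nat ((int c - r) mod int q)"
      and i = "\<lambda>c. nat ((int c + r) mod int q)"])
  fix c assume "c \<in> {..<q}"
  then show "nat ((int (nat ((int c - r) mod int q)) + r) mod int q) = c"
    and "nat ((int c - r) mod int q) \<in> {..<q}"
    and "g (int (nat ((int c - r) mod int q))) = g (int c - r)"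
    using assms by (simp_all add: mod_add_left_eq nat_less_iff)
next
  fix c assume "c \<in> {..<q}"
  then show "nat ((int (nat ((int c + r) mod int q)) - r) mod int q) = c"
    and "nat ((int c + r) mod int q) \<in> {..<q}"
    using assms by (simp_all add: mod_diff_left_eq nat_less_iff)
qed

section \<open>Matrices with orthonormal columns\<close>

definition orthonormal_columns :: "'a set \<Rightarrow> ('a \<Rightarrow> 'a \<Rightarrow> complex) \<Rightarrow> bool" where
  "orthonormal_columns S M \<longleftrightarrow>
     (\<forall>x\<in>S. \<forall>y\<in>S. (\<Sum>z\<in>S. cnj (M z x) * M z y) = (if x = y then 1 else 0))"

lemma unitary_on_iff_orthonormal_columns: "unitary_on S U \<longleftrightarrow> orthonormal_columns S U"
  by (simp add: unitary_on_def orthonormal_columns_def)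

definition id_op :: "'a \<Rightarrow> 'a \<Rightarrow> complex" where
  "id_op x y = (if x = y then 1 else 0)"

lemma sum_id_op:
  assumes "finite S" and "y \<in> S"
  shows "(\<Sum>x\<in>S. f x * id_op x y) = f y"
proof -
  have "(\<Sum>x\<in>S. f x * id_op x y) = (\<Sum>x\<in>S. if x = y then f y else 0)"
    by (intro sum.cong) (auto simp: id_op_def)
  then show ?thesis
    using assms by simp
qed

lemma orthonormal_columns_id:
  assumes "finite S"
  shows "orthonormal_columns S id_op"
proof -
  have "(\<Sum>z\<in>S. cnj (id_op z x) * id_op z y) = (\<Sum>z\<in>S. if z = x then id_op x y else 0)" for x y
    by (intro sum.cong) (auto simp: id_op_def)
  then show ?thesis
    using assms by (simp add: orthonormal_columns_def id_op_def)
qed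

lemma orthonormal_columns_cnj:
  assumes "orthonormal_columns S M"
  shows "orthonormal_columns S (\<lambda>u a. cnj (M u a))"
  unfolding orthonormal_columns_def
proof (intro ballI)
  fix x y assume "x \<in> S" and "y \<in> S"
  have "(\<Sum>z\<in>S. cnj (cnj (M z x)) * cnj (M z y)) = cnj (\<Sum>z\<in>S. cnj (M z x) * M z y)"
    by simp
  also have "\<dots> = (if x = y then 1 else 0)"
    using assms \<open>x \<in> S\<close> \<open>y \<in> S\<close> by (simp add: orthonormal_columns_def)
  finally show "(\<Sum>z\<in>S. cnj (cnj (M z x)) * cnj (M z y)) = (if x = y then 1 else 0)" .
qed

definition tensor_op ::
    "('a \<Rightarrow> 'a \<Rightarrow> complex) \<Rightarrow> ('b \<Rightarrow> 'b \<Rightarrow> complex) \<Rightarrow> 'a \<times> 'b \<Rightarrow> 'a \<times> 'b \<Rightarrow> complex"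
    (infixr "\<otimes>" 70) where
  "(M \<otimes> N) = (\<lambda>(u, v) (a, b). M u a * N v b)"

lemma tensor_op_apply [simp]: "(M \<otimes> N) (u, v) (a, b) = M u a * N v b"
  by (simp add: tensor_op_def)

lemma orthonormal_columns_tensor:
  assumes "orthonormal_columns A M" and "orthonormal_columns B N"
  shows "orthonormal_columns (A \<times> B) (M \<otimes> N)"
  unfolding orthonormal_columns_def
proof (intro ballI)
  fix x y assume "x \<in> A \<times> B" and "y \<in> A \<times> B"
  then obtain a b a' b' where xy: "x = (a, b)" "y = (a', b')" "a \<in> A" "b \<in> B" "a' \<in> A" "b' \<in> B"
    by auto
  have "(\<Sum>z\<in>A \<times> B. cnj ((M \<otimes> N) z x) * (M \<otimes> N) z y)
      = (\<Sum>u\<in>A. cnj (M u a) * M u a') * (\<Sum>v\<in>B. cnj (N v b) * N v b')"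
    unfolding sum_product sum.cartesian_product xy by (intro sum.cong) (auto simp: algebra_simps)
  then show "(\<Sum>z\<in>A \<times> B. cnj ((M \<otimes> N) z x) * (M \<otimes> N) z y) = (if x = y then 1 else 0)"
    using assms xy by (simp add: orthonormal_columns_def)
qed

lemma orthonormal_columns_image:
  assumes "inj_on h S" and "orthonormal_columns S (\<lambda>u a. M (h u) (h a))"
  shows "orthonormal_columns (h ` S) M"
  using assms by (auto simp: orthonormal_columns_def sum.reindex inj_on_eq_iff)

(* map2 truncates to the shorter list; only lists of equal length matter below. *)
definition tensor_list :: "('a \<Rightarrow> 'a \<Rightarrow> complex) \<Rightarrow> 'a list \<Rightarrow> 'a list \<Rightarrow> complex" where
  "tensor_list M us as = prod_list (map2 M us as)"

lemma tensor_list_Cons [simp]: "tensor_list M (u # us) (a # as) = M u a * tensor_list M us as"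
  by (simp add: tensor_list_def)

lemma orthonormal_columns_tensor_list:
  assumes "orthonormal_columns A M"
  shows "orthonormal_columns {xs. set xs \<subseteq> A \<and> length xs = n} (tensor_list M)"
proof (induction n)
  case 0
  have "{xs. set xs \<subseteq> A \<and> length xs = 0} = {[]}"
    by auto
  then show ?case
    by (simp add: orthonormal_columns_def tensor_list_def)
next
  case (Suc n)
  have "orthonormal_columns ({xs. set xs \<subseteq> A \<and> length xs = n} \<times> A) (tensor_list M \<otimes> M)"
    using Suc.IH assms by (rule orthonormal_columns_tensor)
  moreover have "(\<lambda>u a. tensor_list M ((\<lambda>(xs, x). x # xs) u) ((\<lambda>(xs, x). x # xs) a))
      = tensor_list M \<otimes> M"
    by (simp add: fun_eq_iff tensor_op_def mult.commute split_def)
  ultimately show ?case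
    unfolding lists_length_Suc_eq by (intro orthonormal_columns_image inj_split_Cons) simp
qed

section \<open>The one-query algorithm\<close>

definition dft :: "nat \<Rightarrow> nat \<Rightarrow> nat \<Rightarrow> complex" where
  "dft q v c = unity_root q (int v * int c) / sqrt (real q)"

definition idft_vec :: "nat \<Rightarrow> nat list \<Rightarrow> nat list \<Rightarrow> complex" where
  "idft_vec q = tensor_list (\<lambda>u a. cnj (dft q u a))"

(* Hadamard after NOT: it sends |0> to |->, on which flipping the answer bit is
   multiplication by -1, so the query acts as the phase (-1)^Dec. *)
definition minus_gate :: "bool \<Rightarrow> bool \<Rightarrow> complex" where
  "minus_gate y y' = (if y \<and> \<not> y' then -1 else 1) / sqrt 2"

definition prepare_op :: "nat \<Rightarrow> qop" where
  "prepare_op q = idft_vec q \<otimes> dft q \<otimes> minus_gate \<otimes> id_op"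

definition decode_op :: "nat \<Rightarrow> qop" where
  "decode_op q = idft_vec q \<otimes> dft q \<otimes> id_op \<otimes> id_op"

lemma orthonormal_columns_dft:
  assumes "q > 0"
  shows "orthonormal_columns {..<q} (dft q)"
  unfolding orthonormal_columns_def
proof (intro ballI)
  fix a b assume a: "a \<in> {..<q}" and b: "b \<in> {..<q}"
  have sqrt_sq: "complex_of_real (sqrt (real q)) * complex_of_real (sqrt (real q)) = of_nat q"
    by (simp flip: of_real_mult)
  have "(\<Sum>v<q. cnj (dft q v a) * dft q v b) = (\<Sum>v<q. unity_root q (int v * (int b - int a))) / of_nat q"
    unfolding sum_divide_distrib
    by (intro sum.cong refl)
      (simp add: dft_def cnj_unity_root sqrt_sq right_diff_distrib flip: unity_root_add)
  also have "\<dots> = (if a = b then 1 else 0)"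
    using assms a b by (simp add: sum_unity_root_multiples int_dvd_diff_iff_eq)
  finally show "(\<Sum>v<q. cnj (dft q v a) * dft q v b) = (if a = b then 1 else 0)" .
qed

lemma orthonormal_columns_minus_gate: "orthonormal_columns UNIV minus_gate"
proof -
  have "complex_of_real (sqrt 2) * complex_of_real (sqrt 2) = 2"
    by (simp flip: of_real_mult)
  then show ?thesis
    by (auto simp: orthonormal_columns_def minus_gate_def UNIV_bool)
qed

lemma zq_vecs_eq_lists: "zq_vecs n q = {xs. set xs \<subseteq> {..<q} \<and> length xs = n}"
  by (auto simp: zq_vecs_def)

lemma finite_zq_vecs [simp]: "finite (zq_vecs n q)"
  by (simp add: zq_vecs_eq_lists finite_lists_length_eq)

lemma card_zq_vecs: "card (zq_vecs n q) = q ^ n"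
  by (simp add: zq_vecs_eq_lists card_lists_length_eq)

lemma qbasis_set_eq: "qbasis_set n q w = zq_vecs n q \<times> {..<q} \<times> UNIV \<times> {..<w}"
  by (auto simp: qbasis_set_def)

lemma sum_qbasis_set:
  "(\<Sum>x\<in>qbasis_set n q w. f x) = (\<Sum>a\<in>zq_vecs n q. \<Sum>c<q. \<Sum>y\<in>UNIV. \<Sum>j<w. f (a, c, y, j))"
  unfolding qbasis_set_eq by (simp add: sum.cartesian_product)

lemma orthonormal_columns_idft_vec:
  "q > 0 \<Longrightarrow> orthonormal_columns (zq_vecs n q) (idft_vec q)"
  unfolding zq_vecs_eq_lists idft_vec_def
  by (intro orthonormal_columns_tensor_list orthonormal_columns_cnj orthonormal_columns_dft)

lemma unitary_prepare_op: "q > 0 \<Longrightarrow> unitary_on (qbasis_set n q w) (prepare_op q)"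
  unfolding unitary_on_iff_orthonormal_columns qbasis_set_eq prepare_op_def
  by (intro orthonormal_columns_tensor orthonormal_columns_idft_vec orthonormal_columns_dft
      orthonormal_columns_minus_gate orthonormal_columns_id) simp_all

lemma unitary_decode_op: "q > 0 \<Longrightarrow> unitary_on (qbasis_set n q w) (decode_op q)"
  unfolding unitary_on_iff_orthonormal_columns qbasis_set_eq decode_op_def
  by (intro orthonormal_columns_tensor orthonormal_columns_idft_vec orthonormal_columns_dft
      orthonormal_columns_id) simp_all

lemma idft_vec_eq:
  "length us = length as \<Longrightarrow>
    idft_vec q us as = unity_root q (- int (\<Sum>i<length as. as ! i * us ! i)) / sqrt (real q) ^ length as"
proof (induction as arbitrary: us)
  case Nil
  then show ?case
    by (simp add: idft_vec_def tensor_list_def)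
next
  case (Cons a as)
  then obtain u us' where "us = u # us'" and "length us' = length as"
    by (cases us) auto
  moreover have "(\<Sum>i<length (a # as). (a # as) ! i * us ! i) = a * u + (\<Sum>i<length as. as ! i * us' ! i)"
    using \<open>us = u # us'\<close> by (simp add: sum.lessThan_Suc_shift del: sum.lessThan_Suc)
  ultimately show ?case
    using Cons.IH
    by (simp add: idft_vec_def dft_def cnj_unity_root algebra_simps flip: unity_root_add)
qed

lemma prepared_state:
  assumes "q > 0" and "w > 0" and "a \<in> zq_vecs n q"
  shows "apply_op (qbasis_set n q w) (prepare_op q) (init_state n) (a, c, y, j)
    = minus_gate y False * id_op j 0 / sqrt (real q) ^ Suc n"
proof -
  have "(replicate n 0, 0, False, 0) \<in> qbasis_set n q w"
    using assms by (simp add: qbasis_set_def zq_vecs_def)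
  then have "apply_op (qbasis_set n q w) (prepare_op q) (init_state n) (a, c, y, j)
      = prepare_op q (a, c, y, j) (replicate n 0, 0, False, 0)"
    unfolding apply_op_def init_state_def id_op_def[symmetric]
    by (intro sum_id_op) (simp_all add: qbasis_set_eq)
  also have "\<dots> = minus_gate y False * id_op j 0 / sqrt (real q) ^ Suc n"
    using assms by (simp add: prepare_op_def idft_vec_eq zq_vecs_def dft_def)
  finally show ?thesis .
qed

lemma minus_gate_kickback:
  "minus_gate (y \<noteq> d) False = (if d then -1 else 1) * minus_gate y False"
  by (cases y; cases d) (simp_all add: minus_gate_def)

definition threshold_sign :: "nat \<Rightarrow> int \<Rightarrow> complex" where
  "threshold_sign q t = (if abs_zq q t \<le> int (q div 4) then 1 else -1)"

(* Unnormalised: the Fourier coefficient of threshold_sign at frequency 1 is threshold_coeff q / q. *)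
definition threshold_coeff :: "nat \<Rightarrow> complex" where
  "threshold_coeff q = (\<Sum>c<q. unity_root q (int c) * threshold_sign q (int c))"

lemma threshold_sign_mod: "threshold_sign q (t mod int q) = threshold_sign q t"
  by (simp add: threshold_sign_def abs_zq_def)

lemma lwe_dec_threshold_sign:
  "(if lwe_dec q sk a c then -1 else 1) = threshold_sign q (int c - int (\<Sum>i<length a. a ! i * sk ! i))"
  by (simp add: lwe_dec_def threshold_sign_def abs_zq_def inner_zq_def mod_diff_right_eq)

lemma phase_kickback:
  assumes "q > 0" and "sk \<in> zq_vecs n q" and "a \<in> zq_vecs n q"
  defines "t \<equiv> int (\<Sum>i<length a. a ! i * sk ! i)"
  shows "idft_vec q sk a * dft q 1 c
      * dec_oracle q sk (apply_op (qbasis_set n q 1) (prepare_op q) (init_state n)) (a, c, y, 0)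
    = minus_gate y False * (unity_root q (int c - t) * threshold_sign q (int c - t)) / of_nat q ^ Suc n"
proof -
  let ?\<psi> = "apply_op (qbasis_set n q 1) (prepare_op q) (init_state n)"
  have sqrt_sq: "complex_of_real (sqrt (real q) ^ k) * complex_of_real (sqrt (real q) ^ k) = of_nat q ^ k" for k
  proof -
    have "sqrt (real q) ^ k * sqrt (real q) ^ k = real q ^ k"
      by (simp flip: power_mult_distrib)
    then show ?thesis
      by (metis of_real_mult of_real_power of_real_of_nat_eq)
  qed
  have "dec_oracle q sk ?\<psi> (a, c, y, 0) = ?\<psi> (a, c, y \<noteq> lwe_dec q sk a c, 0)"
    by (simp only: dec_oracle_def prod.case)
  also have "\<dots> = minus_gate (y \<noteq> lwe_dec q sk a c) False / sqrt (real q) ^ Suc n"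
    using assms by (simp add: prepared_state id_op_def)
  also have "\<dots> = threshold_sign q (int c - t) * minus_gate y False / sqrt (real q) ^ Suc n"
    by (simp only: minus_gate_kickback lwe_dec_threshold_sign t_def)
  finally have queried: "dec_oracle q sk ?\<psi> (a, c, y, 0) = \<dots>" .
  have phase: "idft_vec q sk a * dft q 1 c = unity_root q (int c - t) / sqrt (real q) ^ Suc n"
    using assms by (simp add: idft_vec_eq zq_vecs_def dft_def t_def flip: unity_root_add)
  show ?thesis
    unfolding phase queried times_divide_times_eq sqrt_sq by (simp add: ac_simps)
qed

lemma final_amplitude:
  assumes "q > 0" and "sk \<in> zq_vecs n q"
  defines "S \<equiv> qbasis_set n q 1"
  shows "apply_op S (decode_op q) (dec_oracle q sk (apply_op S (prepare_op q) (init_state n))) (sk, 1, y, 0)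
    = minus_gate y False * threshold_coeff q / of_nat q"
proof -
  let ?\<psi> = "dec_oracle q sk (apply_op S (prepare_op q) (init_state n))"
  have "apply_op S (decode_op q) ?\<psi> (sk, 1, y, 0)
      = (\<Sum>a\<in>zq_vecs n q. \<Sum>c<q. idft_vec q sk a * dft q 1 c * ?\<psi> (a, c, y, 0))"
    unfolding apply_op_def S_def sum_qbasis_set decode_op_def
    by (cases y) (simp_all add: id_op_def UNIV_bool)
  also have "\<dots> = (\<Sum>a\<in>zq_vecs n q. minus_gate y False * threshold_coeff q / of_nat q ^ Suc n)"
  proof (intro sum.cong refl)
    fix a assume a: "a \<in> zq_vecs n q"
    let ?t = "int (\<Sum>i<length a. a ! i * sk ! i)"
    have "(\<Sum>c<q. unity_root q (int c - ?t) * threshold_sign q (int c - ?t)) = threshold_coeff q"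
      unfolding threshold_coeff_def
      using assms by (intro sum_lessThan_shift_periodic) (simp_all add: unity_root_mod threshold_sign_mod)
    then show "(\<Sum>c<q. idft_vec q sk a * dft q 1 c * ?\<psi> (a, c, y, 0))
        = minus_gate y False * threshold_coeff q / of_nat q ^ Suc n"
      unfolding S_def phase_kickback[OF assms(1,2) a] by (simp flip: sum_distrib_left sum_divide_distrib)
  qed
  also have "\<dots> = minus_gate y False * threshold_coeff q / of_nat q"
    using assms by (simp add: card_zq_vecs field_simps)
  finally show ?thesis .
qed

lemma one_query_success_ge:
  assumes "q \<ge> 2" and "sk \<in> zq_vecs n q"
  shows "(cmod (threshold_coeff q) / q)\<^sup>2 \<le> one_query_success n q 1 (prepare_op q) (decode_op q) fst sk"
proof -
  let ?S = "qbasis_set n q 1"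
  let ?\<phi> = "apply_op ?S (decode_op q) (dec_oracle q sk (apply_op ?S (prepare_op q) (init_state n)))"
  have amplitude: "?\<phi> (sk, 1, y, 0) = minus_gate y False * threshold_coeff q / of_nat q" for y
    using assms final_amplitude[of q sk n y] by simp
  have "(cmod (threshold_coeff q) / q)\<^sup>2 = (\<Sum>y\<in>UNIV. (cmod (?\<phi> (sk, 1, y, 0)))\<^sup>2)"
    unfolding amplitude by (simp add: UNIV_bool norm_mult norm_divide minus_gate_def power_divide power_mult_distrib)
  also have "\<dots> = (\<Sum>x\<in>(\<lambda>y. (sk, 1, y, 0)) ` UNIV. (cmod (?\<phi> x))\<^sup>2)"
    by (simp add: sum.reindex inj_on_def)
  also have "\<dots> \<le> (\<Sum>x\<in>{x \<in> ?S. fst x = sk}. (cmod (?\<phi> x))\<^sup>2)"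
    using assms by (intro sum_mono2) (auto simp: qbasis_set_eq)
  also have "\<dots> = one_query_success n q 1 (prepare_op q) (decode_op q) fst sk"
    by (simp add: one_query_success_def Let_def)
  finally show ?thesis .
qed

section \<open>The size of the threshold coefficient\<close>

lemma threshold_sign_shifted:
  assumes "c < q"
  shows "threshold_sign q (int c - int (q div 4)) = (if c \<le> 2 * (q div 4) then 1 else -1)"
proof (cases "q div 4 \<le> c")
  case True
  then have "(int c - int (q div 4)) mod int q = int c - int (q div 4)"
    using assms by (intro mod_pos_pos_trivial) auto
  then show ?thesis
    using True assms by (auto simp: threshold_sign_def abs_zq_def)
next
  case False
  have "(int c - int (q div 4)) mod int q = (int c - int (q div 4) + int q) mod int q"
    by simp
  also have "\<dots> = int c - int (q div 4) + int q"
    using False assms by (intro mod_pos_pos_trivial) auto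
  finally show ?thesis
    using False assms by (auto simp: threshold_sign_def abs_zq_def)
qed

lemma threshold_coeff_geometric:
  assumes "q \<ge> 2"
  shows "threshold_coeff q
    = 2 * unity_root q (- int (q div 4)) * (\<Sum>c<2 * (q div 4) + 1. unity_root q 1 ^ c)"
proof -
  define m where "m = q div 4"
  define N where "N = 2 * m + 1"
  have "{..<q} \<inter> {..<N} = {..<N}"
    using assms unfolding N_def m_def by auto
  then have restrict: "(\<Sum>c<q. if c < N then f c else 0) = (\<Sum>c<N. f c)" for f :: "nat \<Rightarrow> complex"
    using sum.inter_restrict[of "{..<q}" f "{..<N}"] by simp
  have shift: "unity_root q (int c - int m) = unity_root q (- int m) * unity_root q 1 ^ c" for c
    by (simp add: unity_root_power flip: unity_root_add)
  have "threshold_coeff q = (\<Sum>c<q. unity_root q (int c - int m) * threshold_sign q (int c - int m))"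
    unfolding threshold_coeff_def using assms
    by (intro sum_lessThan_shift_periodic[symmetric]) (simp_all add: unity_root_mod threshold_sign_mod)
  also have "\<dots> = (\<Sum>c<q. 2 * (if c < N then unity_root q (int c - int m) else 0) - unity_root q (int c - int m))"
    using assms by (intro sum.cong refl) (auto simp: threshold_sign_shifted m_def N_def)
  also have "\<dots> = 2 * (\<Sum>c<N. unity_root q (int c - int m)) - (\<Sum>c<q. unity_root q (int c - int m))"
    by (simp add: sum_subtractf restrict flip: sum_distrib_left)
  also have "(\<Sum>c<q. unity_root q (int c - int m)) = unity_root q (- int m) * (\<Sum>c<q. unity_root q (int c * 1))"
    by (simp add: sum_distrib_left flip: unity_root_add)
  also have "(\<Sum>c<q. unity_root q (int c * 1)) = 0"
    using assms by (subst sum_unity_root_multiples) auto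
  finally have "threshold_coeff q = 2 * (\<Sum>c<N. unity_root q (- int m) * unity_root q 1 ^ c)"
    by (simp add: shift)
  then show ?thesis
    by (simp only: N_def m_def mult.assoc flip: sum_distrib_left)
qed

lemma norm_one_minus_cis: "cmod (1 - cis t) = 2 * \<bar>sin (t / 2)\<bar>"
proof -
  have "(cmod (1 - cis t))\<^sup>2 = (1 - cos t)\<^sup>2 + (sin t)\<^sup>2"
    by (simp add: cmod_power2)
  also have "\<dots> = 2 - 2 * cos t"
    using sin_cos_squared_add[of t] by (simp add: power2_eq_square algebra_simps)
  also have "\<dots> = (2 * \<bar>sin (t / 2)\<bar>)\<^sup>2"
    using cos_double_sin[of "t / 2"] by (simp add: power2_eq_square)
  finally show ?thesis
    by (rule power2_eq_imp_eq) simp_all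
qed

lemma norm_threshold_coeff:
  assumes "q \<ge> 2"
  shows "cmod (threshold_coeff q) = 2 * \<bar>sin (pi * real (2 * (q div 4) + 1) / real q)\<bar> / sin (pi / real q)"
proof -
  define N where "N = 2 * (q div 4) + 1"
  let ?z = "unity_root q 1"
  have z: "?z = cis (2 * pi / real q)"
    by (simp add: unity_root_def)
  have "?z \<noteq> 1"
    using assms by (simp add: unity_root_eq_1_iff)
  have "sin (pi / real q) > 0"
    using assms by (intro sin_gt_zero) (simp_all add: divide_less_eq)
  have "threshold_coeff q = 2 * unity_root q (- int (q div 4)) * (\<Sum>c<N. ?z ^ c)"
    using threshold_coeff_geometric[OF assms] unfolding N_def .
  also have "(\<Sum>c<N. ?z ^ c) = (1 - ?z ^ N) / (1 - ?z)"
    using \<open>?z \<noteq> 1\<close> by (simp add: sum_gp_strict)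
  finally have "cmod (threshold_coeff q) = 2 * cmod (1 - ?z ^ N) / cmod (1 - ?z)"
    by (simp add: norm_mult norm_divide)
  also have "cmod (1 - ?z ^ N) = 2 * \<bar>sin (pi * real N / real q)\<bar>"
    unfolding z Complex.DeMoivre norm_one_minus_cis by (simp add: mult.commute)
  also have "cmod (1 - ?z) = 2 * sin (pi / real q)"
    using \<open>sin (pi / real q) > 0\<close> unfolding z norm_one_minus_cis by simp
  finally show ?thesis
    unfolding N_def by simp
qed

lemma quarter_ratio_limit: "(\<lambda>q. real (2 * (q div 4) + 1) / real q) \<longlonglongrightarrow> 1 / 2"
proof (rule tendsto_sandwich[where f = "\<lambda>q. 1 / 2 - 1 / (2 * real q)" and h = "\<lambda>q. 1 / 2 + 1 / real q"])
  show "\<forall>\<^sub>F q in sequentially. 1 / 2 - 1 / (2 * real q) \<le> real (2 * (q div 4) + 1) / real q"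
  proof (rule eventually_sequentiallyI[of 1])
    fix q :: nat assume "1 \<le> q"
    have "real q \<le> real (4 * (q div 4) + 3)"
      by (subst of_nat_le_iff) linarith
    then have "((real q - 1) / 2) / real q \<le> real (2 * (q div 4) + 1) / real q"
      by (intro divide_right_mono) simp_all
    moreover have "1 / 2 - 1 / (2 * real q) = ((real q - 1) / 2) / real q"
      using \<open>1 \<le> q\<close> by (simp add: field_simps)
    ultimately show "1 / 2 - 1 / (2 * real q) \<le> real (2 * (q div 4) + 1) / real q"
      by simp
  qed
  show "\<forall>\<^sub>F q in sequentially. real (2 * (q div 4) + 1) / real q \<le> 1 / 2 + 1 / real q"
  proof (rule eventually_sequentiallyI[of 1])
    fix q :: nat assume "1 \<le> q"
    have "real (4 * (q div 4)) \<le> real q"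
      by (subst of_nat_le_iff) linarith
    then have "real (2 * (q div 4) + 1) / real q \<le> ((real q + 2) / 2) / real q"
      by (intro divide_right_mono) simp_all
    also have "\<dots> = 1 / 2 + 1 / real q"
      using \<open>1 \<le> q\<close> by (simp add: field_simps)
    finally show "real (2 * (q div 4) + 1) / real q \<le> 1 / 2 + 1 / real q" .
  qed
qed real_asymp+

lemma threshold_coeff_asymptotics: "(\<lambda>q. cmod (threshold_coeff q) / real q) \<longlonglongrightarrow> 2 / pi"
proof -
  have "(\<lambda>q. sin (pi * (real (2 * (q div 4) + 1) / real q))) \<longlonglongrightarrow> sin (pi * (1 / 2))"
    by (intro tendsto_sin tendsto_mult_left quarter_ratio_limit)
  moreover have "(\<lambda>q. real q * sin (pi / real q)) \<longlonglongrightarrow> pi"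
    by real_asymp
  ultimately have "(\<lambda>q. 2 * \<bar>sin (pi * (real (2 * (q div 4) + 1) / real q))\<bar> / (real q * sin (pi / real q)))
      \<longlonglongrightarrow> 2 * \<bar>sin (pi * (1 / 2))\<bar> / pi"
    by (intro tendsto_divide tendsto_mult_left tendsto_rabs) simp_all
  moreover have "\<forall>\<^sub>F q in sequentially. 2 * \<bar>sin (pi * (real (2 * (q div 4) + 1) / real q))\<bar> / (real q * sin (pi / real q))
      = cmod (threshold_coeff q) / real q"
    using eventually_ge_at_top[of 2] by eventually_elim (simp add: norm_threshold_coeff)
  ultimately show ?thesis
    by (simp add: Lim_transform_eventually)
qed

theorem corollary2:
  shows "\<exists>(w :: nat \<Rightarrow> nat \<Rightarrow> nat) (U0 :: nat \<Rightarrow> nat \<Rightarrow> qop) (U1 :: nat \<Rightarrow> nat \<Rightarrow> qop)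
            (out :: nat \<Rightarrow> nat \<Rightarrow> qbasis \<Rightarrow> nat list) (\<delta> :: nat \<Rightarrow> real).
     \<delta> \<longlonglongrightarrow> 0 \<and>
     (\<forall>n q. 1 \<le> n \<and> 2 \<le> q \<longrightarrow>
        0 < w n q \<and>
        unitary_on (qbasis_set n q (w n q)) (U0 n q) \<and>
        unitary_on (qbasis_set n q (w n q)) (U1 n q) \<and>
        (\<forall>sk\<in>zq_vecs n q.
           4 / pi\<^sup>2 - \<delta> q \<le> one_query_success n q (w n q) (U0 n q) (U1 n q) (out n q) sk))"
proof -
  define \<delta> :: "nat \<Rightarrow> real" where "\<delta> q = 4 / pi\<^sup>2 - (cmod (threshold_coeff q) / q)\<^sup>2" for q
  have "\<delta> \<longlonglongrightarrow> 4 / pi\<^sup>2 - (2 / pi)\<^sup>2"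
    unfolding \<delta>_def by (intro tendsto_intros threshold_coeff_asymptotics)
  then have "\<delta> \<longlonglongrightarrow> 0"
    by (simp add: power_divide)
  moreover have "4 / pi\<^sup>2 - \<delta> q \<le> one_query_success n q 1 (prepare_op q) (decode_op q) fst sk"
    if "2 \<le> q" and "sk \<in> zq_vecs n q" for n q sk
    using one_query_success_ge[OF that] by (simp add: \<delta>_def)
  ultimately show ?thesis
    by (intro exI[of _ "\<lambda>_ _. 1"] exI[of _ "\<lambda>_. prepare_op"] exI[of _ "\<lambda>_. decode_op"]
        exI[of _ "\<lambda>_ _. fst"] exI[of _ \<delta>])
      (auto intro: unitary_prepare_op unitary_decode_op)
qed

end
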